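(* Let $q>0$ and let $g:\Omega\times(0,\infty)\to\mathbb R$ be a Carathéodory function, bounded below, such that $y\mapsto g(x,y)/y$ is decreasing on $(0,\infty)$ for a.e. $x\in\Omega$. Let $u,v\in L^\infty(\Omega)\cap X_0(\Omega)$ with $u,v>0$ in $\Omega$, $\int_\Omega u^{1-q}dx<\infty$, $\int_\Omega v^{1-q}dx<\infty$, and $(-\Delta)^s u\le u^{-q}+g(x,u)$ and $(-\Delta)^s v\ge v^{-q}+g(x,v)$ weakly in $(X_0(\Omega))^*$. Suppose moreover there exist $0<w\in L^\infty(\Omega)$ and constants $c_1,c_2>0$ with $c_1w\le u,v\le c_2w$ in $\Omega$ and $\int_\Omega|g(x,c_1w)|w\,dx<\infty$, $\int_\Omega|g(x,c_2w)|w\,dx<\infty$. Then $u\le v$ in $\Omega$.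
   Context: $s\in(0,1)$, $n>2s$, $\Omega\subset\mathbb R^n$ bounded domain with $C^2$ boundary. $(-\Delta)^s u(x)=2C_n^s\,\mathrm{P.V.}\int_{\mathbb R^n}\frac{u(x)-u(y)}{|x-y|^{n+2s}}dy$, $C_n^s=\pi^{-n/2}2^{2s-1}s\,\Gamma(\frac{n+2s}{2})/\Gamma(1-s)$. $Q=\mathbb R^{2n}\setminus((\mathbb R^n\setminus\Omega)^2)$; $X_0(\Omega)$ is the Hilbert space of measurable $u$ on $\mathbb R^n$ vanishing a.e. outside $\Omega$, with $u\in L^2(\Omega)$ and $\|u\|_{X_0}^2=C_n^s\int_Q\frac{|u(x)-u(y)|^2}{|x-y|^{n+2s}}dxdy<\infty$; $(X_0(\Omega))^*$ its dual. "$(-\Delta)^s u\le F$ weakly" means $C_n^s\int_Q\frac{(u(x)-u(y))(\phi(x)-\phi(y))}{|x-y|^{n+2s}}dxdy\le\int_\Omega F\phi\,dx$ for all nonnegative $\phi\in X_0(\Omega)$ (reverse inequality for $\ge$). *)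

theory Defs
  imports "HOL-Analysis.Analysis"
begin

definition frac_const :: "nat \<Rightarrow> real \<Rightarrow> real" where
  "frac_const n s = pi powr (- real n / 2) * 2 powr (2 * s - 1) * s
      * Gamma ((real n + 2 * s) / 2) / Gamma (1 - s)"

definition QQ :: "'a set \<Rightarrow> ('a \<times> 'a) set" where
  "QQ \<Omega> = UNIV - ((- \<Omega>) \<times> (- \<Omega>))"

text \<open>The space X_0(Omega) (as a set of representatives).\<close>
definition X0 :: "real \<Rightarrow> 'a::euclidean_space set \<Rightarrow> ('a \<Rightarrow> real) set" where
  "X0 s \<Omega> = {u. u \<in> borel_measurable lebesgue
      \<and> (AE x in lebesgue. x \<notin> \<Omega> \<longrightarrow> u x = 0)
      \<and> (\<integral>\<^sup>+ x. indicator \<Omega> x * ennreal ((u x)\<^sup>2) \<partial>lebesgue) < \<infinity>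
      \<and> (\<integral>\<^sup>+ z. indicator (QQ \<Omega>) z *
            ennreal (frac_const DIM('a) s * (u (fst z) - u (snd z))\<^sup>2
               / norm (fst z - snd z) powr (real DIM('a) + 2 * s))
          \<partial>(lebesgue \<Otimes>\<^sub>M lebesgue)) < \<infinity>}"

definition frac_form :: "real \<Rightarrow> 'a::euclidean_space set \<Rightarrow> ('a \<Rightarrow> real) \<Rightarrow> ('a \<Rightarrow> real) \<Rightarrow> real" where
  "frac_form s \<Omega> u \<phi> = frac_const DIM('a) s *
     (\<integral> z. indicator (QQ \<Omega>) z *
        ((u (fst z) - u (snd z)) * (\<phi> (fst z) - \<phi> (snd z))
          / norm (fst z - snd z) powr (real DIM('a) + 2 * s))
      \<partial>(lebesgue \<Otimes>\<^sub>M lebesgue))"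

definition ext_integral :: "'a measure \<Rightarrow> ('a \<Rightarrow> real) \<Rightarrow> ereal" where
  "ext_integral M f = enn2ereal (\<integral>\<^sup>+ x. ennreal (f x) \<partial>M)
                    - enn2ereal (\<integral>\<^sup>+ x. ennreal (- f x) \<partial>M)"

definition frac_sub :: "real \<Rightarrow> 'a::euclidean_space set \<Rightarrow> ('a \<Rightarrow> real) \<Rightarrow> ('a \<Rightarrow> real) \<Rightarrow> bool" where
  "frac_sub s \<Omega> u F \<longleftrightarrow> (\<forall>\<phi> \<in> X0 s \<Omega>. (AE x in lebesgue. 0 \<le> \<phi> x) \<longrightarrow>
      ereal (frac_form s \<Omega> u \<phi>) \<le> ext_integral lebesgue (\<lambda>x. indicator \<Omega> x * F x * \<phi> x))"

definition frac_super :: "real \<Rightarrow> 'a::euclidean_space set \<Rightarrow> ('a \<Rightarrow> real) \<Rightarrow> ('a \<Rightarrow> real) \<Rightarrow> bool" where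
  "frac_super s \<Omega> u F \<longleftrightarrow> (\<forall>\<phi> \<in> X0 s \<Omega>. (AE x in lebesgue. 0 \<le> \<phi> x) \<longrightarrow>
      ereal (frac_form s \<Omega> u \<phi>) \<ge> ext_integral lebesgue (\<lambda>x. indicator \<Omega> x * F x * \<phi> x))"

definition Linf :: "'a::euclidean_space set \<Rightarrow> ('a \<Rightarrow> real) set" where
  "Linf \<Omega> = {f. f \<in> borel_measurable (restrict_space lebesgue \<Omega>)
      \<and> (\<exists>C. AE x in lebesgue. x \<in> \<Omega> \<longrightarrow> \<bar>f x\<bar> \<le> C)}"

definition C2_boundary :: "'a::euclidean_space set \<Rightarrow> bool" where
  "C2_boundary \<Omega> \<longleftrightarrow> (\<forall>p \<in> frontier \<Omega>. \<exists>r>0. \<exists>(\<rho>::'a \<Rightarrow> real) \<rho>' \<rho>''.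
      (\<forall>x \<in> ball p r. (\<rho> has_derivative blinfun_apply (\<rho>' x)) (at x))
    \<and> (\<forall>x \<in> ball p r. (\<rho>' has_derivative blinfun_apply (\<rho>'' x)) (at x))
    \<and> continuous_on (ball p r) \<rho>''
    \<and> (\<forall>x \<in> ball p r. \<rho>' x \<noteq> 0)
    \<and> \<Omega> \<inter> ball p r = {x \<in> ball p r. \<rho> x < 0})"

definition caratheodory :: "'a::euclidean_space set \<Rightarrow> ('a \<Rightarrow> real \<Rightarrow> real) \<Rightarrow> bool" where
  "caratheodory \<Omega> g \<longleftrightarrow>
     (\<forall>y>0. (\<lambda>x. g x y) \<in> borel_measurable (restrict_space lebesgue \<Omega>))
   \<and> (AE x in lebesgue. x \<in> \<Omega> \<longrightarrow> continuous_on {0<..} (g x))"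

end

theory Submission
  imports Defs
begin

text \<open>Test the two inequalities with the Picone pair phi = (u^2 - v^2)^+ / u (against the
subsolution u) and psi = (u^2 - v^2)^+ / v (against the supersolution v). Since c1 w \<le> u, v \<le> c2 w,
the ratio u / v stays in [c1/c2, c2/c1]; on that cone (u, v) \<mapsto> (phi, psi) is Lipschitz, so
phi, psi \<in> X0. The discrete Picone inequality (a1 - a2)(phi1 - phi2) \<ge> (b1 - b2)(psi1 - psi2)
compares the bilinear forms and yields
  \<integral> (v^-q + g(v)) psi \<le> \<integral> (u^-q + g(u)) phi.
Pointwise, however, the second integrand minus the first equals
  (u^2 - v^2)^+ ((v^(-q-1) - u^(-q-1)) + (g(v)/v - g(u)/u)) \<ge> 0,
strictly where v < u; hence {v < u} is null. The reaction terms are integrable thanks to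
\<integral> u^(1-q) < \<infinity> and the bound |g(y)| \<le> (c2/c1) |g(c1 w)| + |g(c2 w)| on [c1 w, c2 w], which follows
from the monotonicity of g(y)/y.\<close>

definition picone_phi :: "real \<Rightarrow> real \<Rightarrow> real" where
  "picone_phi a b = (if 0 < a \<and> 0 < b then max 0 (a\<^sup>2 - b\<^sup>2) / a else 0)"

definition picone_psi :: "real \<Rightarrow> real \<Rightarrow> real" where
  "picone_psi a b = (if 0 < a \<and> 0 < b then max 0 (a\<^sup>2 - b\<^sup>2) / b else 0)"

definition comparable :: "real \<Rightarrow> real \<Rightarrow> real \<Rightarrow> bool" where
  "comparable R a b \<longleftrightarrow> (0 < a \<and> 0 < b \<and> b \<le> R * a \<and> a \<le> R * b) \<or> (a = 0 \<and> b = 0)"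

lemma comparable_zero [simp]: "comparable R 0 0"
  by (simp add: comparable_def)

lemma comparable_nonneg: "comparable R a b \<Longrightarrow> 0 \<le> a \<and> 0 \<le> b"
  by (auto simp: comparable_def)

lemma comparable_ge_one: "comparable R a b \<Longrightarrow> 0 < a \<Longrightarrow> 1 \<le> R"
  unfolding comparable_def
  by (smt (verit, best) mult_le_cancel_right1 mult_right_mono)

lemma comparable_of_bounds:
  fixes c1 c2 w a b :: real
  assumes "0 < c1" "0 < w" "c1 * w \<le> a" "a \<le> c2 * w" "c1 * w \<le> b" "b \<le> c2 * w"
  shows "comparable (c2 / c1) a b"
proof -
  have "0 < a" "0 < b" using assms by (smt (verit) mult_pos_pos)+
  moreover have "x * c1 \<le> a' * c2" if "c1 * w \<le> a'" "x \<le> c2 * w" for x a'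
  proof -
    have "0 \<le> c2" using assms by (smt (verit) mult_le_cancel_right)
    have "x * c1 \<le> c2 * (c1 * w)" using that assms by (simp add: mult.commute mult_right_mono)
    also have "\<dots> \<le> c2 * a'" using that \<open>0 \<le> c2\<close> by (intro mult_left_mono)
    finally show ?thesis by (simp add: mult.commute)
  qed
  then have "b \<le> (c2 / c1) * a" "a \<le> (c2 / c1) * b"
    using assms by (simp_all add: field_simps)
  ultimately show ?thesis by (simp add: comparable_def)
qed

lemma picone_phi_nonneg: "0 \<le> picone_phi a b"
  by (simp add: picone_phi_def)

lemma picone_psi_nonneg: "0 \<le> picone_psi a b"
  by (simp add: picone_psi_def)

lemma picone_phi_le: "0 \<le> a \<Longrightarrow> picone_phi a b \<le> a"
  by (auto simp: picone_phi_def max_def field_simps power2_eq_square)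

lemma picone_psi_le:
  assumes "comparable R a b"
  shows "picone_psi a b \<le> R\<^sup>2 * b"
proof (cases "0 < a \<and> 0 < b")
  case True
  then have "a \<le> R * b" using assms by (auto simp: comparable_def)
  have "picone_psi a b \<le> a\<^sup>2 / b"
    using True by (auto simp: picone_psi_def intro: divide_right_mono)
  also have "\<dots> \<le> (R * b)\<^sup>2 / b"
    using True \<open>a \<le> R * b\<close> by (intro divide_right_mono power_mono) auto
  also have "\<dots> = R\<^sup>2 * b" using True by (simp add: power2_eq_square)
  finally show ?thesis .
qed (use assms in \<open>auto simp: comparable_def picone_psi_def\<close>)

lemma picone_phi_pos_eq: "0 < a \<Longrightarrow> 0 < b \<Longrightarrow> picone_phi a b = max 0 (a - b\<^sup>2 / a)"
  by (simp add: picone_phi_def max_def field_simps power2_eq_square)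

lemma picone_psi_pos_eq: "0 < a \<Longrightarrow> 0 < b \<Longrightarrow> picone_psi a b = max 0 (- (b - a\<^sup>2 / b))"
  by (simp add: picone_psi_def max_def field_simps power2_eq_square)

lemma picone_inequality_pos:
  fixes a1 a2 b1 b2 :: real
  assumes "0 < a1" "0 < a2" "0 < b1" "0 < b2"
  shows "0 \<le> (a1 - a2) * (picone_phi a1 b1 - picone_phi a2 b2)
              - (b1 - b2) * (picone_psi a1 b1 - picone_psi a2 b2)"
proof -
  define P1 where "P1 = max 0 (a1\<^sup>2 - b1\<^sup>2)"
  define P2 where "P2 = max 0 (a2\<^sup>2 - b2\<^sup>2)"
  have identity: "((a1 - a2) * (picone_phi a1 b1 - picone_phi a2 b2)
              - (b1 - b2) * (picone_psi a1 b1 - picone_psi a2 b2)) * (a1 * a2 * b1 * b2)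
      = (a1 * b2 - a2 * b1) * (P1 * a2 * b2 - P2 * a1 * b1)"
    using assms unfolding picone_phi_def picone_psi_def P1_def[symmetric] P2_def[symmetric]
    by (simp add: field_simps)
  have P: "0 \<le> P1" "0 \<le> P2" by (simp_all add: P1_def P2_def)
  have P1_eq: "P1 = (if b1 < a1 then a1\<^sup>2 - b1\<^sup>2 else 0)"
    using assms by (auto simp: P1_def max_def power_strict_mono power_mono)
  have P2_eq: "P2 = (if b2 < a2 then a2\<^sup>2 - b2\<^sup>2 else 0)"
    using assms by (auto simp: P2_def max_def power_strict_mono power_mono)
  have "0 \<le> (a1 * b2 - a2 * b1) * (P1 * a2 * b2 - P2 * a1 * b1)"
  proof (cases "b1 < a1"; cases "b2 < a2")
    assume "b1 < a1" "b2 < a2"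
    then have "(a1 * b2 - a2 * b1) * (P1 * a2 * b2 - P2 * a1 * b1)
        = (a1 * b2 - a2 * b1)\<^sup>2 * (a1 * a2 + b1 * b2)"
      by (simp add: P1_eq P2_eq algebra_simps power2_eq_square)
    then show ?thesis using assms by simp
  next
    assume "b1 < a1" "\<not> b2 < a2"
    then have "0 \<le> a1 * b2 - a2 * b1"
      using assms by (smt (verit) mult_mono mult_strict_right_mono mult.commute)
    then show ?thesis using P assms by (simp add: P2_eq \<open>\<not> b2 < a2\<close>)
  next
    assume "\<not> b1 < a1" "b2 < a2"
    then have "a1 * b2 - a2 * b1 \<le> 0"
      using assms by (smt (verit) mult_mono mult_strict_right_mono mult.commute)
    then show ?thesis using P assms
      by (simp add: P1_eq \<open>\<not> b1 < a1\<close> mult_nonpos_nonneg)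
  qed (simp add: P1_eq P2_eq)
  with identity show ?thesis
    using assms by (metis zero_le_mult_iff not_le mult_pos_pos)
qed

lemma picone_inequality:
  assumes "comparable R a1 b1" "comparable R a2 b2"
  shows "0 \<le> (a1 - a2) * (picone_phi a1 b1 - picone_phi a2 b2)
              - (b1 - b2) * (picone_psi a1 b1 - picone_psi a2 b2)"
proof -
  have vanish: "a * picone_phi a b - b * picone_psi a b = 0" for a b
    by (simp add: picone_phi_def picone_psi_def)
  show ?thesis
    using assms picone_inequality_pos[of a1 a2 b1 b2] vanish[of a1 b1] vanish[of a2 b2]
    by (auto simp: comparable_def picone_phi_def picone_psi_def)
qed

lemma cone_lipschitz:
  fixes a1 a2 b1 b2 R :: real
  assumes "0 < a1" "0 < a2" "0 \<le> b1" "0 \<le> b2" "b1 \<le> R * a1" "b2 \<le> R * a2"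
  shows "\<bar>(a1 - b1\<^sup>2 / a1) - (a2 - b2\<^sup>2 / a2)\<bar> \<le> (1 + R\<^sup>2) * \<bar>a1 - a2\<bar> + 2 * R * \<bar>b1 - b2\<bar>"
proof -
  define r1 r2 where "r1 = b1 / a1" and "r2 = b2 / a2"
  have r: "0 \<le> r1" "r1 \<le> R" "0 \<le> r2" "r2 \<le> R"
    using assms by (auto simp: r1_def r2_def field_simps)
  have "b1\<^sup>2 / a1 - b2\<^sup>2 / a2 = (b1 - b2) * r1 + r2 * (r1 * (a2 - a1) + (b1 - b2))"
    using assms by (simp add: r1_def r2_def field_simps power2_eq_square)
  also have "\<bar>\<dots>\<bar> \<le> \<bar>b1 - b2\<bar> * R + R * (R * \<bar>a1 - a2\<bar> + \<bar>b1 - b2\<bar>)"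
  proof -
    have "\<bar>r1 * (a2 - a1) + (b1 - b2)\<bar> \<le> R * \<bar>a1 - a2\<bar> + \<bar>b1 - b2\<bar>"
      using r mult_right_mono[OF r(2), of "\<bar>a1 - a2\<bar>"]
      by (auto simp: abs_mult abs_minus_commute intro!: order.trans[OF abs_triangle_ineq])
    then have "\<bar>r2 * (r1 * (a2 - a1) + (b1 - b2))\<bar> \<le> R * (R * \<bar>a1 - a2\<bar> + \<bar>b1 - b2\<bar>)"
      using r by (auto simp: abs_mult intro!: mult_mono)
    moreover have "\<bar>(b1 - b2) * r1\<bar> \<le> \<bar>b1 - b2\<bar> * R"
      using r by (auto simp: abs_mult intro!: mult_left_mono)
    ultimately show ?thesis by (smt (verit) abs_triangle_ineq)
  qed
  finally show ?thesis by (simp add: algebra_simps power2_eq_square)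
qed

lemma picone_phi_lipschitz:
  assumes "comparable R a1 b1" "comparable R a2 b2"
  shows "\<bar>picone_phi a1 b1 - picone_phi a2 b2\<bar> \<le> (1 + R\<^sup>2) * \<bar>a1 - a2\<bar> + 2 * R * \<bar>b1 - b2\<bar>"
proof -
  have bound: "\<bar>picone_phi a b\<bar> \<le> (1 + R\<^sup>2) * a + 2 * R * b" if "comparable R a b" for a b
  proof (cases "0 < a")
    case True
    then have "0 \<le> R" "0 \<le> b" using that comparable_ge_one comparable_nonneg by fastforce+
    have "picone_phi a b \<le> a" using True by (simp add: picone_phi_le)
    also have "\<dots> \<le> (1 + R\<^sup>2) * a + 2 * R * b"
      using True \<open>0 \<le> R\<close> \<open>0 \<le> b\<close> by (simp add: distrib_right)
    finally show ?thesis by (simp add: picone_phi_nonneg)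
  qed (use that in \<open>auto simp: comparable_def picone_phi_def\<close>)
  consider "0 < a1" "0 < b1" "0 < a2" "0 < b2" | "a1 = 0" "b1 = 0" | "a2 = 0" "b2 = 0"
    using assms by (auto simp: comparable_def)
  then show ?thesis
  proof cases
    case 1
    have "\<bar>max 0 x - max 0 y\<bar> \<le> \<bar>x - y\<bar>" for x y :: real by linarith
    then show ?thesis
      using 1 assms order.trans[OF _ cone_lipschitz[of a1 a2 b1 b2 R]]
      by (simp add: picone_phi_pos_eq comparable_def)
  next
    case 2
    then show ?thesis
      using bound[OF assms(2)] comparable_nonneg[OF assms(2)] by (simp add: picone_phi_def)
  next
    case 3
    then show ?thesis
      using bound[OF assms(1)] comparable_nonneg[OF assms(1)] by (simp add: picone_phi_def)
  qed
qed

lemma picone_psi_lipschitz: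
  assumes "comparable R a1 b1" "comparable R a2 b2"
  shows "\<bar>picone_psi a1 b1 - picone_psi a2 b2\<bar> \<le> (1 + R\<^sup>2) * \<bar>b1 - b2\<bar> + 2 * R * \<bar>a1 - a2\<bar>"
proof -
  have bound: "\<bar>picone_psi a b\<bar> \<le> (1 + R\<^sup>2) * b + 2 * R * a" if "comparable R a b" for a b
  proof (cases "0 < a")
    case True
    then have "0 \<le> R" "0 \<le> b" using that comparable_ge_one comparable_nonneg by fastforce+
    have "picone_psi a b \<le> R\<^sup>2 * b" using that by (rule picone_psi_le)
    also have "\<dots> \<le> (1 + R\<^sup>2) * b + 2 * R * a"
      using True \<open>0 \<le> R\<close> \<open>0 \<le> b\<close> by (simp add: distrib_right)
    finally show ?thesis by (simp add: picone_psi_nonneg)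
  qed (use that in \<open>auto simp: comparable_def picone_psi_def\<close>)
  consider "0 < a1" "0 < b1" "0 < a2" "0 < b2" | "a1 = 0" "b1 = 0" | "a2 = 0" "b2 = 0"
    using assms by (auto simp: comparable_def)
  then show ?thesis
  proof cases
    case 1
    have "\<bar>max 0 (- x) - max 0 (- y)\<bar> \<le> \<bar>x - y\<bar>" for x y :: real by linarith
    then show ?thesis
      using 1 assms order.trans[OF _ cone_lipschitz[of b1 b2 a1 a2 R]]
      by (simp add: picone_psi_pos_eq comparable_def)
  next
    case 2
    then show ?thesis
      using bound[OF assms(2)] comparable_nonneg[OF assms(2)] by (simp add: picone_psi_def)
  next
    case 3
    then show ?thesis
      using bound[OF assms(1)] comparable_nonneg[OF assms(1)] by (simp add: picone_psi_def)
  qed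
qed

lemma power2_le_of_abs_le_lincomb:
  fixes x y z A B :: real
  assumes "\<bar>z\<bar> \<le> A * \<bar>x\<bar> + B * \<bar>y\<bar>" "0 \<le> A" "0 \<le> B"
  shows "z\<^sup>2 \<le> 2 * (A\<^sup>2 + B\<^sup>2) * (x\<^sup>2 + y\<^sup>2)"
proof -
  have "z\<^sup>2 \<le> (A * \<bar>x\<bar> + B * \<bar>y\<bar>)\<^sup>2"
    using assms by (metis abs_ge_zero power2_abs power_mono)
  also have "\<dots> \<le> 2 * (A\<^sup>2 * x\<^sup>2 + B\<^sup>2 * y\<^sup>2)"
    using zero_le_power2[of "A * \<bar>x\<bar> - B * \<bar>y\<bar>"]
    by (simp add: power2_eq_square algebra_simps)
  also have "\<dots> \<le> 2 * (A\<^sup>2 + B\<^sup>2) * (x\<^sup>2 + y\<^sup>2)"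
    using zero_le_power2[of "A * y"] zero_le_power2[of "B * x"]
    by (simp add: power2_eq_square algebra_simps)
  finally show ?thesis .
qed

lemma picone_lipschitz_sq:
  assumes "comparable R a1 b1" "comparable R a2 b2" "0 \<le> R"
  defines "L \<equiv> 2 * ((1 + R\<^sup>2)\<^sup>2 + (2 * R)\<^sup>2)"
  shows "(picone_phi a1 b1 - picone_phi a2 b2)\<^sup>2 \<le> L * ((a1 - a2)\<^sup>2 + (b1 - b2)\<^sup>2)"
    and "(picone_psi a1 b1 - picone_psi a2 b2)\<^sup>2 \<le> L * ((a1 - a2)\<^sup>2 + (b1 - b2)\<^sup>2)"
  using power2_le_of_abs_le_lincomb[OF picone_phi_lipschitz[OF assms(1,2)]]
    power2_le_of_abs_le_lincomb[OF picone_psi_lipschitz[OF assms(1,2)]] assms(3)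
  by (simp_all add: L_def add.commute)

lemma (in pair_sigma_finite) AE_pair_fst_snd:
  assumes "AE x in M1. P x" "AE y in M2. Q y"
  shows "AE z in M1 \<Otimes>\<^sub>M M2. P (fst z) \<and> Q (snd z)"
proof -
  obtain N1 where N1: "{x \<in> space M1. \<not> P x} \<subseteq> N1" "N1 \<in> null_sets M1"
    using assms(1) by (auto elim!: AE_E simp: null_sets_def)
  obtain N2 where N2: "{y \<in> space M2. \<not> Q y} \<subseteq> N2" "N2 \<in> null_sets M2"
    using assms(2) by (auto elim!: AE_E simp: null_sets_def)
  have "N1 \<times> space M2 \<union> space M1 \<times> N2 \<in> null_sets (M1 \<Otimes>\<^sub>M M2)"
    using N1(2) N2(2) by (intro null_sets.Un M2.times_in_null_sets1 M2.times_in_null_sets2) auto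
  then show ?thesis
    by (rule AE_I') (use N1 N2 in \<open>auto simp: space_pair_measure\<close>)
qed

lemma sigma_finite_lebesgue: "sigma_finite_measure (lebesgue :: 'a::euclidean_space measure)"
proof
  obtain A :: "'a set set" where "countable A" "A \<subseteq> sets lborel" "\<Union>A = space lborel"
    "\<forall>a\<in>A. emeasure lborel a \<noteq> \<infinity>"
    using sigma_finite_measure.sigma_finite_countable[OF sigma_finite_lborel] by blast
  then show "\<exists>A. countable A \<and> A \<subseteq> sets lebesgue \<and> \<Union>A = space (lebesgue :: 'a measure)
      \<and> (\<forall>a\<in>A. emeasure lebesgue a \<noteq> \<infinity>)"
    by (intro exI[of _ A]) (auto simp: emeasure_completion)
qed

interpretation lebesgue_pair: pair_sigma_finite "lebesgue :: 'a::euclidean_space measure" lebesgue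
  by (intro pair_sigma_finite.intro sigma_finite_lebesgue)

lemma QQ_in_sets:
  assumes "open \<Omega>"
  shows "QQ \<Omega> \<in> sets (lebesgue \<Otimes>\<^sub>M (lebesgue :: 'a::euclidean_space measure))"
proof -
  have "- \<Omega> \<in> sets lebesgue" using assms by (simp add: borel_closed)
  then have "(- \<Omega>) \<times> (- \<Omega>) \<in> sets (lebesgue \<Otimes>\<^sub>M (lebesgue :: 'a measure))"
    by (intro pair_measureI)
  then show ?thesis
    unfolding QQ_def by (metis sets.compl_sets space_pair_measure space_completion space_lborel
      space_borel UNIV_Times_UNIV Compl_eq_Diff_UNIV)
qed

definition frac_kernel :: "real \<Rightarrow> 'a::euclidean_space \<times> 'a \<Rightarrow> real" where
  "frac_kernel s z = norm (fst z - snd z) powr (real DIM('a) + 2 * s)"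

definition frac_density ::
    "real \<Rightarrow> 'a::euclidean_space set \<Rightarrow> ('a \<Rightarrow> real) \<Rightarrow> ('a \<Rightarrow> real) \<Rightarrow> 'a \<times> 'a \<Rightarrow> real" where
  "frac_density s \<Omega> f g z = frac_const DIM('a) s * (indicator (QQ \<Omega>) z *
      ((f (fst z) - f (snd z)) * (g (fst z) - g (snd z)) / frac_kernel s z))"

lemma frac_kernel_measurable [measurable]:
  "frac_kernel s \<in> borel_measurable (lebesgue \<Otimes>\<^sub>M (lebesgue :: 'a::euclidean_space measure))"
proof -
  have id: "(\<lambda>x::'a. x) \<in> borel_measurable lebesgue" by (rule measurable_completion) simp
  have [measurable]: "(\<lambda>z. fst z :: 'a) \<in> borel_measurable (lebesgue \<Otimes>\<^sub>M lebesgue)"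
    "(\<lambda>z. snd z :: 'a) \<in> borel_measurable (lebesgue \<Otimes>\<^sub>M lebesgue)"
    by (rule measurable_compose[OF measurable_fst id] measurable_compose[OF measurable_snd id])+
  show ?thesis unfolding frac_kernel_def[abs_def] by measurable
qed

lemma frac_density_measurable:
  assumes "open \<Omega>" "f \<in> borel_measurable lebesgue" "g \<in> borel_measurable lebesgue"
  shows "frac_density s \<Omega> f g \<in> borel_measurable (lebesgue \<Otimes>\<^sub>M (lebesgue :: 'a::euclidean_space measure))"
proof -
  have [measurable]: "QQ \<Omega> \<in> sets (lebesgue \<Otimes>\<^sub>M (lebesgue :: 'a measure))"
    using assms(1) by (rule QQ_in_sets)
  note [measurable] = assms(2,3)
  show ?thesis unfolding frac_density_def[abs_def] by measurable
qed

lemma frac_const_pos: "0 < s \<Longrightarrow> s < 1 \<Longrightarrow> 0 < frac_const n s"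
  unfolding frac_const_def by (intro divide_pos_pos mult_pos_pos) (auto simp: Gamma_real_pos_exp)

lemma frac_density_eq:
  fixes z :: "'a::euclidean_space \<times> 'a"
  shows "frac_density s \<Omega> f g z = frac_const DIM('a) s * indicator (QQ \<Omega>) z / frac_kernel s z
      * ((f (fst z) - f (snd z)) * (g (fst z) - g (snd z)))"
  by (simp add: frac_density_def)

lemma frac_density_self_eq:
  fixes z :: "'a::euclidean_space \<times> 'a"
  shows "frac_density s \<Omega> f f z
     = frac_const DIM('a) s * indicator (QQ \<Omega>) z / frac_kernel s z * (f (fst z) - f (snd z))\<^sup>2"
  by (simp add: frac_density_eq power2_eq_square)

lemma frac_density_self_nonneg: "0 < s \<Longrightarrow> s < 1 \<Longrightarrow> 0 \<le> frac_density s \<Omega> f f z"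
  by (simp add: frac_density_def frac_kernel_def frac_const_pos less_imp_le mult_nonneg_nonneg)

lemma frac_form_eq_integral:
  "frac_form s \<Omega> f g = (\<integral> z. frac_density s \<Omega> f g z \<partial>(lebesgue \<Otimes>\<^sub>M lebesgue))"
  unfolding frac_form_def frac_density_def frac_kernel_def by (rule integral_mult_right_zero[symmetric])

lemma X0_iff:
  "f \<in> X0 s \<Omega> \<longleftrightarrow> f \<in> borel_measurable lebesgue \<and> (AE x in lebesgue. x \<notin> \<Omega> \<longrightarrow> f x = 0)
     \<and> (\<integral>\<^sup>+ x. ennreal (indicator \<Omega> x * (f x)\<^sup>2) \<partial>lebesgue) < \<infinity>
     \<and> (\<integral>\<^sup>+ z. ennreal (frac_density s \<Omega> f f z) \<partial>(lebesgue \<Otimes>\<^sub>M lebesgue)) < \<infinity>"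
proof -
  have "(\<integral>\<^sup>+ x. indicator \<Omega> x * ennreal ((f x)\<^sup>2) \<partial>lebesgue)
        = (\<integral>\<^sup>+ x. ennreal (indicator \<Omega> x * (f x)\<^sup>2) \<partial>lebesgue)"
    and "(\<integral>\<^sup>+ z. indicator (QQ \<Omega>) z * ennreal (frac_const DIM('a) s * (f (fst z) - f (snd z))\<^sup>2
            / norm (fst z - snd z) powr (real DIM('a) + 2 * s)) \<partial>(lebesgue \<Otimes>\<^sub>M lebesgue))
        = (\<integral>\<^sup>+ z. ennreal (frac_density s \<Omega> f f z) \<partial>(lebesgue \<Otimes>\<^sub>M lebesgue))"
    by (auto intro!: nn_integral_cong simp: frac_density_def frac_kernel_def indicator_def power2_eq_square)
  then show ?thesis unfolding X0_def by simp
qed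

lemma nn_integral_finite_of_dominated:
  fixes h f1 f2 :: "'b \<Rightarrow> real"
  assumes "f1 \<in> borel_measurable M" "f2 \<in> borel_measurable M" "\<And>x. 0 \<le> f1 x" "\<And>x. 0 \<le> f2 x"
    and "(\<integral>\<^sup>+ x. ennreal (f1 x) \<partial>M) < \<infinity>" "(\<integral>\<^sup>+ x. ennreal (f2 x) \<partial>M) < \<infinity>"
    and "AE x in M. h x \<le> L * (f1 x + f2 x)"
  shows "(\<integral>\<^sup>+ x. ennreal (h x) \<partial>M) < \<infinity>"
proof -
  have "(\<integral>\<^sup>+ x. ennreal (h x) \<partial>M) \<le> (\<integral>\<^sup>+ x. ennreal L * (ennreal (f1 x) + ennreal (f2 x)) \<partial>M)"
    using assms(7) by (intro nn_integral_mono_AE) (auto elim!: eventually_mono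
      intro: order.trans[OF ennreal_leI] simp: ennreal_mult'' assms(3,4) add_nonneg_nonneg)
  also have "\<dots> = ennreal L * ((\<integral>\<^sup>+ x. ennreal (f1 x) \<partial>M) + (\<integral>\<^sup>+ x. ennreal (f2 x) \<partial>M))"
    using assms(1,2) by (simp add: nn_integral_cmult nn_integral_add)
  also have "\<dots> < \<infinity>" using assms(5,6) by (simp add: ennreal_mult_less_top)
  finally show ?thesis .
qed

lemma abs_frac_density_le:
  assumes "0 < s" "s < 1"
  shows "\<bar>frac_density s \<Omega> f g z\<bar> \<le> frac_density s \<Omega> f f z + frac_density s \<Omega> g g z"
proof -
  define a b C K where "a = f (fst z) - f (snd z)" and "b = g (fst z) - g (snd z)"
    and "C = frac_const DIM('a) s * indicator (QQ \<Omega>) z" and "K = frac_kernel s z"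
  have "0 \<le> C" unfolding C_def using less_imp_le[OF frac_const_pos[OF assms]] by simp
  have "0 \<le> K" by (simp add: K_def frac_kernel_def)
  have "2 * (\<bar>a\<bar> * \<bar>b\<bar>) \<le> a * a + b * b"
    using zero_le_power2[of "\<bar>a\<bar> - \<bar>b\<bar>"] by (simp add: power2_eq_square algebra_simps)
  then have "\<bar>a * b\<bar> \<le> a * a + b * b"
    using mult_nonneg_nonneg[OF abs_ge_zero abs_ge_zero, of a b] unfolding abs_mult by linarith
  then have "C * (\<bar>a * b\<bar> / K) \<le> C * ((a * a + b * b) / K)"
    using \<open>0 \<le> C\<close> \<open>0 \<le> K\<close> by (intro mult_left_mono divide_right_mono)
  then show ?thesis
    using \<open>0 \<le> C\<close> \<open>0 \<le> K\<close>
    by (simp add: frac_density_def a_def[symmetric] b_def[symmetric] C_def[symmetric]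
        K_def[symmetric] mult.assoc[symmetric] abs_mult add_divide_distrib distrib_left)
qed

lemma integrable_frac_density:
  assumes "open \<Omega>" "0 < s" "s < 1" "f \<in> X0 s \<Omega>" "g \<in> X0 s \<Omega>"
  shows "integrable (lebesgue \<Otimes>\<^sub>M lebesgue) (frac_density s \<Omega> f g :: 'a::euclidean_space \<times> 'a \<Rightarrow> real)"
proof (rule Bochner_Integration.integrable_bound)
  have self: "integrable (lebesgue \<Otimes>\<^sub>M lebesgue) (frac_density s \<Omega> h h :: 'a \<times> 'a \<Rightarrow> real)"
    if "h \<in> X0 s \<Omega>" for h
    using that assms(1) frac_density_self_nonneg[OF assms(2,3)]
    by (intro integrableI_nonneg AE_I2) (auto simp: X0_iff intro: frac_density_measurable)
  show "integrable (lebesgue \<Otimes>\<^sub>M lebesgue) (\<lambda>z. frac_density s \<Omega> f f z + frac_density s \<Omega> g g z)"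
    using self[OF assms(4)] self[OF assms(5)] by simp
  show "frac_density s \<Omega> f g \<in> borel_measurable (lebesgue \<Otimes>\<^sub>M lebesgue)"
    using assms(1,4,5) by (intro frac_density_measurable) (simp_all add: X0_iff)
  show "AE z in lebesgue \<Otimes>\<^sub>M lebesgue.
      norm (frac_density s \<Omega> f g z) \<le> norm (frac_density s \<Omega> f f z + frac_density s \<Omega> g g z)"
  proof (rule AE_I2)
    fix z :: "'a \<times> 'a"
    show "norm (frac_density s \<Omega> f g z) \<le> norm (frac_density s \<Omega> f f z + frac_density s \<Omega> g g z)"
      using abs_frac_density_le[OF assms(2,3), of \<Omega> f g z]
        frac_density_self_nonneg[OF assms(2,3), of \<Omega> f z] frac_density_self_nonneg[OF assms(2,3), of \<Omega> g z]
      by simp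
  qed
qed

lemma X0_of_dominated:
  fixes \<Omega> :: "'a::euclidean_space set"
  assumes "open \<Omega>" "0 < s" "s < 1" "f \<in> X0 s \<Omega>" "h \<in> X0 s \<Omega>" "\<phi> \<in> borel_measurable lebesgue"
    and "AE x in lebesgue. x \<notin> \<Omega> \<longrightarrow> \<phi> x = 0"
    and "AE x in lebesgue. (\<phi> x)\<^sup>2 \<le> L * ((f x)\<^sup>2 + (h x)\<^sup>2)"
    and "AE z in lebesgue \<Otimes>\<^sub>M lebesgue. (\<phi> (fst z) - \<phi> (snd z))\<^sup>2
           \<le> L * ((f (fst z) - f (snd z))\<^sup>2 + (h (fst z) - h (snd z))\<^sup>2)"
  shows "\<phi> \<in> X0 s \<Omega>"
proof -
  note f = assms(4)[unfolded X0_iff] and h = assms(5)[unfolded X0_iff]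
  have [measurable]: "\<Omega> \<in> sets lebesgue" using assms(1) by (simp add: borel_open)
  note [measurable] = assms(6) f[THEN conjunct1] h[THEN conjunct1]
  have "(\<integral>\<^sup>+ x. ennreal (indicator \<Omega> x * (\<phi> x)\<^sup>2) \<partial>lebesgue) < \<infinity>"
  proof (rule nn_integral_finite_of_dominated)
    show "AE x in lebesgue. indicator \<Omega> x * (\<phi> x)\<^sup>2
        \<le> L * (indicator \<Omega> x * (f x)\<^sup>2 + indicator \<Omega> x * (h x)\<^sup>2)"
      using assms(8) by eventually_elim (auto simp: indicator_def)
  qed (use f h in auto)
  moreover have "(\<integral>\<^sup>+ z. ennreal (frac_density s \<Omega> \<phi> \<phi> z) \<partial>(lebesgue \<Otimes>\<^sub>M lebesgue)) < \<infinity>"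
  proof (rule nn_integral_finite_of_dominated)
    show "AE z in lebesgue \<Otimes>\<^sub>M lebesgue.
        frac_density s \<Omega> \<phi> \<phi> z \<le> L * (frac_density s \<Omega> f f z + frac_density s \<Omega> h h z)"
      using assms(9)
    proof eventually_elim
      case (elim z)
      have "0 \<le> frac_const DIM('a) s * indicator (QQ \<Omega>) z / frac_kernel s z"
        using less_imp_le[OF frac_const_pos[OF assms(2,3)]] by (simp add: frac_kernel_def)
      from mult_left_mono[OF elim this] show ?case
        by (simp add: frac_density_self_eq algebra_simps)
    qed
  qed (use f h frac_density_self_nonneg[OF assms(2,3)] assms(1) in \<open>auto intro: frac_density_measurable\<close>)
  ultimately show ?thesis using assms(6,7) by (simp add: X0_iff)
qed

lemma picone_tests_in_X0:
  fixes \<Omega> :: "'a::euclidean_space set"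
  assumes "open \<Omega>" "0 < s" "s < 1" "u \<in> X0 s \<Omega>" "v \<in> X0 s \<Omega>" "0 \<le> R"
    and "AE x in lebesgue. comparable R (u x) (v x)"
  shows "(\<lambda>x. picone_phi (u x) (v x)) \<in> X0 s \<Omega>" and "(\<lambda>x. picone_psi (u x) (v x)) \<in> X0 s \<Omega>"
proof -
  define L where "L = 2 * ((1 + R\<^sup>2)\<^sup>2 + (2 * R)\<^sup>2)"
  note [measurable] = assms(4,5)[unfolded X0_iff, THEN conjunct1]
  have vanish: "AE x in lebesgue. x \<notin> \<Omega> \<longrightarrow> u x = 0 \<and> v x = 0"
    using assms(4,5) by (auto simp: X0_iff)
  have pairs: "AE z in lebesgue \<Otimes>\<^sub>M lebesgue.
      comparable R (u (fst z)) (v (fst z)) \<and> comparable R (u (snd z)) (v (snd z))"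
    by (rule lebesgue_pair.AE_pair_fst_snd[OF assms(7) assms(7)])
  note lip = picone_lipschitz_sq[OF _ _ assms(6), folded L_def]
  show "(\<lambda>x. picone_phi (u x) (v x)) \<in> X0 s \<Omega>"
  proof (rule X0_of_dominated[OF assms(1-5)])
    show "(\<lambda>x. picone_phi (u x) (v x)) \<in> borel_measurable lebesgue"
      unfolding picone_phi_def by measurable
    show "AE x in lebesgue. x \<notin> \<Omega> \<longrightarrow> picone_phi (u x) (v x) = 0"
      using vanish by eventually_elim (simp add: picone_phi_def)
    show "AE x in lebesgue. (picone_phi (u x) (v x))\<^sup>2 \<le> L * ((u x)\<^sup>2 + (v x)\<^sup>2)"
      using assms(7) by eventually_elim (use lip(1)[OF _ comparable_zero] in \<open>simp add: picone_phi_def\<close>)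
    show "AE z in lebesgue \<Otimes>\<^sub>M lebesgue. (picone_phi (u (fst z)) (v (fst z)) - picone_phi (u (snd z)) (v (snd z)))\<^sup>2
        \<le> L * ((u (fst z) - u (snd z))\<^sup>2 + (v (fst z) - v (snd z))\<^sup>2)"
      using pairs by eventually_elim (use lip(1) in blast)
  qed
  show "(\<lambda>x. picone_psi (u x) (v x)) \<in> X0 s \<Omega>"
  proof (rule X0_of_dominated[OF assms(1-5)])
    show "(\<lambda>x. picone_psi (u x) (v x)) \<in> borel_measurable lebesgue"
      unfolding picone_psi_def by measurable
    show "AE x in lebesgue. x \<notin> \<Omega> \<longrightarrow> picone_psi (u x) (v x) = 0"
      using vanish by eventually_elim (simp add: picone_psi_def)
    show "AE x in lebesgue. (picone_psi (u x) (v x))\<^sup>2 \<le> L * ((u x)\<^sup>2 + (v x)\<^sup>2)"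
      using assms(7) by eventually_elim (use lip(2)[OF _ comparable_zero] in \<open>simp add: picone_psi_def\<close>)
    show "AE z in lebesgue \<Otimes>\<^sub>M lebesgue. (picone_psi (u (fst z)) (v (fst z)) - picone_psi (u (snd z)) (v (snd z)))\<^sup>2
        \<le> L * ((u (fst z) - u (snd z))\<^sup>2 + (v (fst z) - v (snd z))\<^sup>2)"
      using pairs by eventually_elim (use lip(2) in blast)
  qed
qed

lemma frac_form_picone_le:
  fixes \<Omega> :: "'a::euclidean_space set"
  assumes "open \<Omega>" "0 < s" "s < 1" "u \<in> X0 s \<Omega>" "v \<in> X0 s \<Omega>" "0 \<le> R"
    and "AE x in lebesgue. comparable R (u x) (v x)"
  shows "frac_form s \<Omega> v (\<lambda>x. picone_psi (u x) (v x)) \<le> frac_form s \<Omega> u (\<lambda>x. picone_phi (u x) (v x))"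
proof -
  note tests = picone_tests_in_X0[OF assms]
  have "frac_form s \<Omega> u (\<lambda>x. picone_phi (u x) (v x)) - frac_form s \<Omega> v (\<lambda>x. picone_psi (u x) (v x))
      = (\<integral> z. frac_density s \<Omega> u (\<lambda>x. picone_phi (u x) (v x)) z
            - frac_density s \<Omega> v (\<lambda>x. picone_psi (u x) (v x)) z \<partial>(lebesgue \<Otimes>\<^sub>M lebesgue))"
    unfolding frac_form_eq_integral
    by (intro Bochner_Integration.integral_diff[symmetric] integrable_frac_density assms(1-5) tests)
  also have "\<dots> \<ge> 0"
  proof (rule integral_nonneg_AE)
    have "AE z in lebesgue \<Otimes>\<^sub>M lebesgue.
        comparable R (u (fst z)) (v (fst z)) \<and> comparable R (u (snd z)) (v (snd z))"
      by (rule lebesgue_pair.AE_pair_fst_snd[OF assms(7) assms(7)])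
    then show "AE z in lebesgue \<Otimes>\<^sub>M lebesgue. 0 \<le> frac_density s \<Omega> u (\<lambda>x. picone_phi (u x) (v x)) z
        - frac_density s \<Omega> v (\<lambda>x. picone_psi (u x) (v x)) z"
    proof eventually_elim
      case (elim z)
      have "0 \<le> frac_const DIM('a) s * indicator (QQ \<Omega>) z / frac_kernel s z"
        using less_imp_le[OF frac_const_pos[OF assms(2,3)]] by (simp add: frac_kernel_def)
      from mult_nonneg_nonneg[OF this picone_inequality[OF elim[THEN conjunct1] elim[THEN conjunct2]]]
      show ?case unfolding frac_density_eq right_diff_distrib[symmetric] .
    qed
  qed
  finally show ?thesis by simp
qed

lemma dyadic_ceiling_tendsto:
  fixes y :: real
  shows "(\<lambda>n. real_of_int \<lceil>y * 2 ^ n\<rceil> / 2 ^ n) \<longlonglongrightarrow> y"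
proof (rule tendsto_sandwich[OF _ _ tendsto_const])
  show "\<forall>\<^sub>F n in sequentially. y \<le> real_of_int \<lceil>y * 2 ^ n\<rceil> / 2 ^ n"
    by (simp add: pos_le_divide_eq)
  show "\<forall>\<^sub>F n in sequentially. real_of_int \<lceil>y * 2 ^ n\<rceil> / 2 ^ n \<le> y + inverse (2 ^ n)"
  proof (intro always_eventually allI)
    fix n :: nat
    have "real_of_int \<lceil>y * 2 ^ n\<rceil> \<le> y * 2 ^ n + 1" by linarith
    then show "real_of_int \<lceil>y * 2 ^ n\<rceil> / 2 ^ n \<le> y + inverse (2 ^ n)"
      by (simp add: pos_divide_le_eq field_simps)
  qed
  show "(\<lambda>n. y + inverse ((2::real) ^ n)) \<longlonglongrightarrow> y"
    using tendsto_add[OF tendsto_const LIMSEQ_inverse_realpow_zero, of "2::real" y] by simp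
qed

lemma borel_measurable_indicator_mult_restrict:
  assumes "\<Omega> \<in> sets M" "f \<in> borel_measurable (restrict_space M \<Omega>)"
  shows "(\<lambda>x. indicator \<Omega> x * f x :: real) \<in> borel_measurable M"
  using borel_measurable_restrict_space_iff[of \<Omega> M f] assms by simp

lemma caratheodory_superposition_measurable:
  fixes g :: "'a::euclidean_space \<Rightarrow> real \<Rightarrow> real"
  assumes "open \<Omega>" "caratheodory \<Omega> g" "f \<in> borel_measurable lebesgue"
    and "AE x in lebesgue. x \<in> \<Omega> \<longrightarrow> 0 < f x"
  shows "(\<lambda>x. indicator \<Omega> x * g x (f x)) \<in> borel_measurable lebesgue"
proof -
  have \<Omega>: "\<Omega> \<in> sets lebesgue" using assms(1) by (simp add: borel_open)
  \<comment> \<open>g is measurable at each fixed level, so sample it along the dyadic ceilings of f\<close>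
  define G where "G n x = (if 0 < \<lceil>f x * 2 ^ n\<rceil>
      then indicator \<Omega> x * g x (real_of_int \<lceil>f x * 2 ^ n\<rceil> / 2 ^ n) else 0)" for n x
  have "G n \<in> borel_measurable lebesgue" for n
  proof -
    have "(\<lambda>x. if 0 < k then indicator \<Omega> x * g x (real_of_int k / 2 ^ n) else 0)
        \<in> borel_measurable lebesgue" for k :: int
    proof (cases "0 < k")
      case True
      then have "(\<lambda>x. g x (real_of_int k / 2 ^ n)) \<in> borel_measurable (restrict_space lebesgue \<Omega>)"
        using assms(2) by (simp add: caratheodory_def)
      with True show ?thesis by (simp add: borel_measurable_indicator_mult_restrict[OF \<Omega>])
    qed simp
    moreover have "(\<lambda>x. \<lceil>f x * 2 ^ n\<rceil>) \<in> lebesgue \<rightarrow>\<^sub>M count_space UNIV"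
      using assms(3) by measurable
    ultimately show ?thesis
      unfolding G_def by (rule measurable_compose_countable)
  qed
  then have "(\<lambda>x. lim (\<lambda>n. G n x)) \<in> borel_measurable lebesgue"
    by (rule borel_measurable_lim_metric)
  moreover have "AE x in lebesgue. lim (\<lambda>n. G n x) = indicator \<Omega> x * g x (f x)"
    using assms(4) assms(2)[unfolded caratheodory_def, THEN conjunct2]
  proof eventually_elim
    case (elim x)
    show ?case
    proof (cases "x \<in> \<Omega>")
      case True
      then have "0 < f x" "continuous_on {0<..} (g x)" using elim by auto
      then have pos: "0 < \<lceil>f x * 2 ^ n\<rceil>" for n by simp
      have "(\<lambda>n. g x (real_of_int \<lceil>f x * 2 ^ n\<rceil> / 2 ^ n)) \<longlonglongrightarrow> g x (f x)"
        using \<open>0 < f x\<close> pos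
        by (intro continuous_on_tendsto_compose[OF \<open>continuous_on {0<..} (g x)\<close>
            dyadic_ceiling_tendsto]) auto
      then show ?thesis using True pos by (simp add: G_def limI)
    next
      case False
      then have "G n x = 0" for n by (simp add: G_def)
      then show ?thesis using False by (simp add: limI)
    qed
  qed
  ultimately show ?thesis by (rule borel_measurable_AE)
qed

lemma ext_integral_eq_integral:
  fixes f :: "'b \<Rightarrow> real"
  assumes "integrable M f"
  shows "ext_integral M f = ereal (integral\<^sup>L M f)"
proof -
  have "(\<integral>\<^sup>+ x. ennreal (f x) \<partial>M) < top" "(\<integral>\<^sup>+ x. ennreal (- f x) \<partial>M) < top"
    using assms by (auto simp: real_integrable_def top.not_eq_extremum)
  moreover have "enn2ereal X = ereal (enn2real X)" if "X < top" for X
    using that by (metis enn2ereal_ennreal enn2real_nonneg ennreal_enn2real less_top)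
  ultimately show ?thesis
    unfolding ext_integral_def real_lebesgue_integral_def[OF assms] by simp
qed

lemma abs_le_of_antimono_quotient:
  fixes G :: "real \<Rightarrow> real"
  assumes "antimono_on {0<..} (\<lambda>y. G y / y)" "0 < a" "a \<le> y" "y \<le> b"
  shows "\<bar>G y\<bar> \<le> b / a * \<bar>G a\<bar> + \<bar>G b\<bar>"
proof -
  have "0 < y" "0 < b" using assms by auto
  have "G y / y \<le> G a / a" "G b / b \<le> G y / y"
    using monotone_onD[OF assms(1)] assms \<open>0 < y\<close> by auto
  then have upper: "G y \<le> y / a * G a" and lower: "y / b * G b \<le> G y"
    using \<open>0 < y\<close> \<open>0 < b\<close> assms(2) by (simp_all add: field_simps)
  have "y / a * G a \<le> y / a * \<bar>G a\<bar>"
    using assms \<open>0 < y\<close> by (intro mult_left_mono) auto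
  also have "\<dots> \<le> b / a * \<bar>G a\<bar>"
    using assms by (intro mult_right_mono divide_right_mono) auto
  finally have "y / a * G a \<le> b / a * \<bar>G a\<bar>" .
  moreover have "- \<bar>G b\<bar> \<le> y / b * G b"
  proof -
    have "y / b * \<bar>G b\<bar> \<le> \<bar>G b\<bar>"
      using mult_right_mono[of "y / b" 1 "\<bar>G b\<bar>"] \<open>0 < b\<close> assms(4) by simp
    moreover have "- (y / b * \<bar>G b\<bar>) \<le> y / b * G b"
      using mult_left_mono[of "- \<bar>G b\<bar>" "G b" "y / b"] \<open>0 < y\<close> \<open>0 < b\<close> by simp
    ultimately show ?thesis by (meson neg_le_iff_le order.trans)
  qed
  moreover have "0 \<le> b / a * \<bar>G a\<bar>" using assms \<open>0 < b\<close> by simp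
  ultimately show ?thesis using upper lower by linarith
qed

lemma reaction_test_bound:
  fixes y p K G B W q :: real
  assumes "0 < y" "0 \<le> p" "p \<le> K * y" "y \<le> W" "0 \<le> K" "\<bar>G\<bar> \<le> B"
  shows "\<bar>(y powr - q + G) * p\<bar> \<le> K * y powr (1 - q) + K * B * W"
proof -
  have "\<bar>(y powr - q + G) * p\<bar> \<le> (y powr - q + \<bar>G\<bar>) * p"
    using assms(2) abs_triangle_ineq[of "y powr - q" G] by (simp add: abs_mult mult_right_mono)
  also have "\<dots> = y powr - q * p + \<bar>G\<bar> * p" by (simp add: distrib_right)
  also have "\<dots> \<le> y powr - q * (K * y) + B * (K * W)"
  proof (intro add_mono mult_mono)
    show "p \<le> K * W" using assms mult_left_mono[OF assms(4) assms(5)] by linarith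
  qed (use assms in auto)
  also have "y powr - q * (K * y) = K * y powr (1 - q)"
    using assms(1) by (simp add: powr_diff powr_minus field_simps)
  finally show ?thesis by (simp add: ac_simps)
qed

lemma integrable_indicator_mult:
  assumes "(\<lambda>x. indicator \<Omega> x * f x :: real) \<in> borel_measurable M"
    and "AE x in M. x \<in> \<Omega> \<longrightarrow> 0 \<le> f x"
    and "(\<integral>\<^sup>+ x. indicator \<Omega> x * ennreal (f x) \<partial>M) < \<infinity>"
  shows "integrable M (\<lambda>x. indicator \<Omega> x * f x)"
proof (rule integrableI_nonneg)
  show "AE x in M. 0 \<le> indicator \<Omega> x * f x"
    using assms(2) by eventually_elim (simp add: indicator_def)
  have "indicator \<Omega> x * ennreal (f x) = ennreal (indicator \<Omega> x * f x)" for x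
    by (simp add: indicator_def)
  then show "(\<integral>\<^sup>+ x. ennreal (indicator \<Omega> x * f x) \<partial>M) < \<infinity>"
    using assms(3) by simp
qed (fact assms(1))

lemma integrable_caratheodory_weight:
  fixes \<Omega> :: "'a::euclidean_space set" and g :: "'a \<Rightarrow> real \<Rightarrow> real"
  assumes "open \<Omega>" "caratheodory \<Omega> g" "w \<in> borel_measurable (restrict_space lebesgue \<Omega>)"
    and "AE x in lebesgue. x \<in> \<Omega> \<longrightarrow> 0 < w x" "0 < c"
    and "(\<integral>\<^sup>+ x. indicator \<Omega> x * ennreal (\<bar>g x (c * w x)\<bar> * w x) \<partial>lebesgue) < \<infinity>"
  shows "integrable lebesgue (\<lambda>x. indicator \<Omega> x * (\<bar>g x (c * w x)\<bar> * w x))"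
proof (rule integrable_indicator_mult)
  have \<Omega>[measurable]: "\<Omega> \<in> sets lebesgue" using assms(1) by (simp add: borel_open)
  define wI where "wI x = indicator \<Omega> x * w x" for x
  have [measurable]: "wI \<in> borel_measurable lebesgue"
    unfolding wI_def using borel_measurable_indicator_mult_restrict[OF \<Omega> assms(3)] .
  have "AE x in lebesgue. x \<in> \<Omega> \<longrightarrow> 0 < c * wI x"
    using assms(4) by eventually_elim (simp add: wI_def \<open>0 < c\<close>)
  then have [measurable]: "(\<lambda>x. indicator \<Omega> x * g x (c * wI x)) \<in> borel_measurable lebesgue"
    by (intro caratheodory_superposition_measurable[OF assms(1,2)]) auto
  have "(\<lambda>x. indicator \<Omega> x * (\<bar>g x (c * w x)\<bar> * w x)) = (\<lambda>x. \<bar>indicator \<Omega> x * g x (c * wI x)\<bar> * wI x)"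
    by (auto simp: wI_def indicator_def)
  then show "(\<lambda>x. indicator \<Omega> x * (\<bar>g x (c * w x)\<bar> * w x)) \<in> borel_measurable lebesgue"
    by simp
  show "AE x in lebesgue. x \<in> \<Omega> \<longrightarrow> 0 \<le> \<bar>g x (c * w x)\<bar> * w x"
    using assms(4) by eventually_elim (auto intro: less_imp_le)
qed (fact assms(6))

lemma integrable_reaction_test:
  fixes \<Omega> :: "'a::euclidean_space set" and g :: "'a \<Rightarrow> real \<Rightarrow> real" and f w p :: "'a \<Rightarrow> real"
  assumes "open \<Omega>" "caratheodory \<Omega> g" "0 < c1" "0 < c2" "0 \<le> K"
    and "f \<in> borel_measurable lebesgue" "p \<in> borel_measurable lebesgue"
    and "w \<in> borel_measurable (restrict_space lebesgue \<Omega>)"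
    and "AE x in lebesgue. x \<in> \<Omega> \<longrightarrow> 0 < w x \<and> c1 * w x \<le> f x \<and> f x \<le> c2 * w x
           \<and> antimono_on {0<..} (\<lambda>y. g x y / y) \<and> 0 \<le> p x \<and> p x \<le> K * f x"
    and "(\<integral>\<^sup>+ x. indicator \<Omega> x * ennreal (f x powr (1 - q)) \<partial>lebesgue) < \<infinity>"
    and "(\<integral>\<^sup>+ x. indicator \<Omega> x * ennreal (\<bar>g x (c1 * w x)\<bar> * w x) \<partial>lebesgue) < \<infinity>"
    and "(\<integral>\<^sup>+ x. indicator \<Omega> x * ennreal (\<bar>g x (c2 * w x)\<bar> * w x) \<partial>lebesgue) < \<infinity>"
  shows "integrable lebesgue (\<lambda>x. indicator \<Omega> x * (f x powr - q + g x (f x)) * p x)"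
proof -
  have \<Omega>[measurable]: "\<Omega> \<in> sets lebesgue" using assms(1) by (simp add: borel_open)
  note [measurable] = assms(6,7)
  define T where "T c x = indicator \<Omega> x * (\<bar>g x (c * w x)\<bar> * w x)" for c x
  note T_integrable = integrable_caratheodory_weight[OF assms(1,2,8), folded T_def]
  have w_pos: "AE x in lebesgue. x \<in> \<Omega> \<longrightarrow> 0 < w x"
    using assms(9) by eventually_elim simp
  have f_pos: "AE x in lebesgue. x \<in> \<Omega> \<longrightarrow> 0 < f x"
    using assms(9) by eventually_elim (smt (verit) assms(3) mult_pos_pos)
  show ?thesis
  proof (rule Bochner_Integration.integrable_bound)
    show "integrable lebesgue (\<lambda>x. K * (indicator \<Omega> x * f x powr (1 - q))
        + K * c2 * (c2 / c1 * T c1 x + T c2 x))"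
      using integrable_indicator_mult[of \<Omega> "\<lambda>x. f x powr (1 - q)", OF _ _ assms(10)]
        T_integrable[OF w_pos assms(3,11)] T_integrable[OF w_pos assms(4,12)] by simp
    have [measurable]: "(\<lambda>x. indicator \<Omega> x * g x (f x)) \<in> borel_measurable lebesgue"
      by (rule caratheodory_superposition_measurable[OF assms(1,2,6) f_pos])
    have "(\<lambda>x. indicator \<Omega> x * (f x powr - q + g x (f x)) * p x)
        = (\<lambda>x. (indicator \<Omega> x * f x powr - q + indicator \<Omega> x * g x (f x)) * p x)"
      by (simp add: algebra_simps)
    then show "(\<lambda>x. indicator \<Omega> x * (f x powr - q + g x (f x)) * p x) \<in> borel_measurable lebesgue"
      by simp
    show "AE x in lebesgue. norm (indicator \<Omega> x * (f x powr - q + g x (f x)) * p x)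
        \<le> norm (K * (indicator \<Omega> x * f x powr (1 - q)) + K * c2 * (c2 / c1 * T c1 x + T c2 x))"
      using assms(9)
    proof eventually_elim
      case (elim x)
      show ?case
      proof (cases "x \<in> \<Omega>")
        case True
        with elim have x: "0 < w x" "c1 * w x \<le> f x" "f x \<le> c2 * w x"
          "antimono_on {0<..} (\<lambda>y. g x y / y)" "0 \<le> p x" "p x \<le> K * f x" by auto
        have "0 < f x" using mult_pos_pos[OF assms(3) x(1)] x(2) by linarith
        have "\<bar>g x (f x)\<bar> \<le> c2 * w x / (c1 * w x) * \<bar>g x (c1 * w x)\<bar> + \<bar>g x (c2 * w x)\<bar>"
          using x assms(3) by (intro abs_le_of_antimono_quotient) auto
        then have "\<bar>(f x powr - q + g x (f x)) * p x\<bar>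
            \<le> K * f x powr (1 - q) + K * (c2 / c1 * \<bar>g x (c1 * w x)\<bar> + \<bar>g x (c2 * w x)\<bar>) * (c2 * w x)"
          using x assms(3,5) \<open>0 < f x\<close> by (intro reaction_test_bound) auto
        moreover have "0 \<le> K * (c2 / c1 * \<bar>g x (c1 * w x)\<bar> + \<bar>g x (c2 * w x)\<bar>) * (c2 * w x)"
          using x assms(3-5) by simp
        ultimately show ?thesis
          using True by (simp add: T_def algebra_simps)
      qed simp
    qed
  qed
qed

lemma picone_reaction_gap:
  fixes a b q Ga Gb :: real
  assumes "0 < a" "0 < b" "0 < q" "b < a \<Longrightarrow> Ga / a \<le> Gb / b"
  shows "0 \<le> (b powr - q + Gb) * picone_psi a b - (a powr - q + Ga) * picone_phi a b"
    and "b < a \<Longrightarrow> 0 < (b powr - q + Gb) * picone_psi a b - (a powr - q + Ga) * picone_phi a b"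
proof -
  show strict: "0 < (b powr - q + Gb) * picone_psi a b - (a powr - q + Ga) * picone_phi a b"
    if "b < a"
  proof -
    define P where "P = a\<^sup>2 - b\<^sup>2"
    have "0 < P" using that assms by (simp add: P_def power_strict_mono)
    \<comment> \<open>strictness comes from the singular term; g(y)/y is only weakly decreasing\<close>
    have "a powr (- q - 1) < b powr (- q - 1)"
      using assms that by (intro powr_less_mono2_neg) auto
    then have "a powr - q / a < b powr - q / b"
      using assms by (simp add: powr_diff powr_minus divide_inverse)
    with assms(4)[OF that] \<open>0 < P\<close>
    have "0 < P * ((b powr - q / b - a powr - q / a) + (Gb / b - Ga / a))" by simp
    also have "\<dots> = (b powr - q + Gb) * picone_psi a b - (a powr - q + Ga) * picone_phi a b"
      using assms \<open>0 < P\<close> by (simp add: picone_phi_def picone_psi_def P_def[symmetric] field_simps)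
    finally show ?thesis .
  qed
  show "0 \<le> (b powr - q + Gb) * picone_psi a b - (a powr - q + Ga) * picone_phi a b"
  proof (cases "b < a")
    case False
    then have "a\<^sup>2 \<le> b\<^sup>2" using assms by (intro power_mono) auto
    then show ?thesis by (simp add: picone_phi_def picone_psi_def)
  qed (use strict in auto)
qed

lemma AE_not_of_integral_le:
  fixes f g :: "'b \<Rightarrow> real"
  assumes "integrable M f" "integrable M g" "integral\<^sup>L M g \<le> integral\<^sup>L M f"
    and "AE x in M. f x \<le> g x" "AE x in M. P x \<longrightarrow> f x < g x"
  shows "AE x in M. \<not> P x"
proof -
  have "integral\<^sup>L M (\<lambda>x. g x - f x) = 0"
    using assms(1-4) integral_mono_AE[OF assms(1,2,4)] by (simp add: Bochner_Integration.integral_diff)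
  then have "AE x in M. g x - f x = 0"
    using assms(1,2,4) by (subst integral_nonneg_eq_0_iff_AE[symmetric]) auto
  with assms(5) show ?thesis by eventually_elim auto
qed

lemma frac_sub_le_integral:
  assumes "frac_sub s \<Omega> u F" "\<phi> \<in> X0 s \<Omega>" "AE x in lebesgue. 0 \<le> \<phi> x"
    and "integrable lebesgue (\<lambda>x. indicator \<Omega> x * F x * \<phi> x)"
  shows "frac_form s \<Omega> u \<phi> \<le> (\<integral> x. indicator \<Omega> x * F x * \<phi> x \<partial>lebesgue)"
proof -
  have "ereal (frac_form s \<Omega> u \<phi>) \<le> ext_integral lebesgue (\<lambda>x. indicator \<Omega> x * F x * \<phi> x)"
    using assms(1-3) unfolding frac_sub_def by blast
  then show ?thesis by (simp add: ext_integral_eq_integral[OF assms(4)])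
qed

lemma frac_super_ge_integral:
  assumes "frac_super s \<Omega> v F" "\<psi> \<in> X0 s \<Omega>" "AE x in lebesgue. 0 \<le> \<psi> x"
    and "integrable lebesgue (\<lambda>x. indicator \<Omega> x * F x * \<psi> x)"
  shows "(\<integral> x. indicator \<Omega> x * F x * \<psi> x \<partial>lebesgue) \<le> frac_form s \<Omega> v \<psi>"
proof -
  have "ext_integral lebesgue (\<lambda>x. indicator \<Omega> x * F x * \<psi> x) \<le> ereal (frac_form s \<Omega> v \<psi>)"
    using assms(1-3) unfolding frac_super_def by blast
  then show ?thesis by (simp add: ext_integral_eq_integral[OF assms(4)])
qed

lemma integral_picone_le_of_sub_super:
  fixes \<Omega> :: "'a::euclidean_space set"
  assumes "open \<Omega>" "0 < s" "s < 1" "u \<in> X0 s \<Omega>" "v \<in> X0 s \<Omega>" "0 \<le> R"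
    and "AE x in lebesgue. comparable R (u x) (v x)"
    and "frac_sub s \<Omega> u F" "frac_super s \<Omega> v G"
    and "integrable lebesgue (\<lambda>x. indicator \<Omega> x * F x * picone_phi (u x) (v x))"
    and "integrable lebesgue (\<lambda>x. indicator \<Omega> x * G x * picone_psi (u x) (v x))"
  shows "(\<integral> x. indicator \<Omega> x * G x * picone_psi (u x) (v x) \<partial>lebesgue)
      \<le> (\<integral> x. indicator \<Omega> x * F x * picone_phi (u x) (v x) \<partial>lebesgue)"
proof -
  note tests = picone_tests_in_X0[OF assms(1-7)]
  have "(\<integral> x. indicator \<Omega> x * G x * picone_psi (u x) (v x) \<partial>lebesgue)
      \<le> frac_form s \<Omega> v (\<lambda>x. picone_psi (u x) (v x))"
    by (rule frac_super_ge_integral[OF assms(9) tests(2) _ assms(11)]) (simp add: picone_psi_nonneg)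
  also have "\<dots> \<le> frac_form s \<Omega> u (\<lambda>x. picone_phi (u x) (v x))"
    by (rule frac_form_picone_le[OF assms(1-7)])
  also have "\<dots> \<le> (\<integral> x. indicator \<Omega> x * F x * picone_phi (u x) (v x) \<partial>lebesgue)"
    by (rule frac_sub_le_integral[OF assms(8) tests(1) _ assms(10)]) (simp add: picone_phi_nonneg)
  finally show ?thesis .
qed

lemma AE_comparable_of_bounds:
  assumes "0 < c1" "u \<in> X0 s \<Omega>" "v \<in> X0 s \<Omega>"
    and "AE x in lebesgue. x \<in> \<Omega> \<longrightarrow> 0 < w x"
    and "AE x in lebesgue. x \<in> \<Omega> \<longrightarrow>
           c1 * w x \<le> u x \<and> u x \<le> c2 * w x \<and> c1 * w x \<le> v x \<and> v x \<le> c2 * w x"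
  shows "AE x in lebesgue. comparable (c2 / c1) (u x) (v x)"
proof -
  have "AE x in lebesgue. x \<notin> \<Omega> \<longrightarrow> u x = 0" "AE x in lebesgue. x \<notin> \<Omega> \<longrightarrow> v x = 0"
    using assms(2,3) by (simp_all add: X0_iff)
  with assms(4,5) show ?thesis
  proof eventually_elim
    case (elim x)
    then show ?case
      using comparable_of_bounds[of c1 "w x" "u x" c2 "v x"] assms(1) by (cases "x \<in> \<Omega>") simp_all
  qed
qed

lemma integrable_picone_reactions:
  fixes \<Omega> :: "'a::euclidean_space set" and g :: "'a \<Rightarrow> real \<Rightarrow> real"
  assumes "open \<Omega>" "caratheodory \<Omega> g" "0 < c1" "0 < c2"
    and "u \<in> X0 s \<Omega>" "v \<in> X0 s \<Omega>" "w \<in> borel_measurable (restrict_space lebesgue \<Omega>)"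
    and "AE x in lebesgue. x \<in> \<Omega> \<longrightarrow> antimono_on {0<..} (\<lambda>y. g x y / y)"
    and "AE x in lebesgue. x \<in> \<Omega> \<longrightarrow> 0 < w x"
    and "AE x in lebesgue. x \<in> \<Omega> \<longrightarrow>
           c1 * w x \<le> u x \<and> u x \<le> c2 * w x \<and> c1 * w x \<le> v x \<and> v x \<le> c2 * w x"
    and "(\<integral>\<^sup>+ x. indicator \<Omega> x * ennreal (u x powr (1 - q)) \<partial>lebesgue) < \<infinity>"
    and "(\<integral>\<^sup>+ x. indicator \<Omega> x * ennreal (v x powr (1 - q)) \<partial>lebesgue) < \<infinity>"
    and "(\<integral>\<^sup>+ x. indicator \<Omega> x * ennreal (\<bar>g x (c1 * w x)\<bar> * w x) \<partial>lebesgue) < \<infinity>"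
    and "(\<integral>\<^sup>+ x. indicator \<Omega> x * ennreal (\<bar>g x (c2 * w x)\<bar> * w x) \<partial>lebesgue) < \<infinity>"
  shows "integrable lebesgue (\<lambda>x. indicator \<Omega> x * (u x powr - q + g x (u x)) * picone_phi (u x) (v x))"
    and "integrable lebesgue (\<lambda>x. indicator \<Omega> x * (v x powr - q + g x (v x)) * picone_psi (u x) (v x))"
proof -
  have measurable: "f \<in> borel_measurable lebesgue" if "f \<in> X0 s \<Omega>" for f
    using that by (simp add: X0_iff)
  note [measurable] = measurable[OF assms(5)] measurable[OF assms(6)]
  have comparable: "AE x in lebesgue. comparable (c2 / c1) (u x) (v x)"
    by (rule AE_comparable_of_bounds[OF assms(3,5,6,9,10)])
  show "integrable lebesgue (\<lambda>x. indicator \<Omega> x * (u x powr - q + g x (u x)) * picone_phi (u x) (v x))"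
  proof (rule integrable_reaction_test[OF assms(1-4) zero_le_one _ _ assms(7) _ assms(11,13,14)])
    show "AE x in lebesgue. x \<in> \<Omega> \<longrightarrow> 0 < w x \<and> c1 * w x \<le> u x \<and> u x \<le> c2 * w x
        \<and> antimono_on {0<..} (\<lambda>y. g x y / y) \<and> 0 \<le> picone_phi (u x) (v x) \<and> picone_phi (u x) (v x) \<le> 1 * u x"
      using assms(8-10) comparable
      by eventually_elim (simp add: picone_phi_nonneg picone_phi_le comparable_nonneg)
    show "(\<lambda>x. picone_phi (u x) (v x)) \<in> borel_measurable lebesgue"
      unfolding picone_phi_def by measurable
  qed simp
  show "integrable lebesgue (\<lambda>x. indicator \<Omega> x * (v x powr - q + g x (v x)) * picone_psi (u x) (v x))"
  proof (rule integrable_reaction_test[OF assms(1-4) zero_le_power2 _ _ assms(7) _ assms(12,13,14)])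
    show "AE x in lebesgue. x \<in> \<Omega> \<longrightarrow> 0 < w x \<and> c1 * w x \<le> v x \<and> v x \<le> c2 * w x
        \<and> antimono_on {0<..} (\<lambda>y. g x y / y) \<and> 0 \<le> picone_psi (u x) (v x)
        \<and> picone_psi (u x) (v x) \<le> (c2 / c1)\<^sup>2 * v x"
      using assms(8-10) comparable by eventually_elim (simp add: picone_psi_nonneg picone_psi_le)
    show "(\<lambda>x. picone_psi (u x) (v x)) \<in> borel_measurable lebesgue"
      unfolding picone_psi_def by measurable
  qed simp
qed

lemma AE_picone_reaction_gap:
  assumes "0 < q"
    and "AE x in lebesgue. x \<in> \<Omega> \<longrightarrow> 0 < u x" "AE x in lebesgue. x \<in> \<Omega> \<longrightarrow> 0 < v x"
    and "AE x in lebesgue. x \<in> \<Omega> \<longrightarrow> antimono_on {0<..} (\<lambda>y. g x y / y)"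
  defines "Hu \<equiv> \<lambda>x. indicator \<Omega> x * (u x powr - q + g x (u x)) * picone_phi (u x) (v x)"
    and "Hv \<equiv> \<lambda>x. indicator \<Omega> x * (v x powr - q + g x (v x)) * picone_psi (u x) (v x)"
  shows "AE x in lebesgue. Hu x \<le> Hv x \<and> (x \<in> \<Omega> \<and> v x < u x \<longrightarrow> Hu x < Hv x)"
  using assms(2-4)
proof eventually_elim
  case (elim x)
  show ?case
  proof (cases "x \<in> \<Omega>")
    case True
    with elim have "0 < u x" "0 < v x" "antimono_on {0<..} (\<lambda>y. g x y / y)" by auto
    then have "v x < u x \<Longrightarrow> g x (u x) / u x \<le> g x (v x) / v x"
      using monotone_onD[of "{0<..}" "(\<le>)" "(\<ge>)" "\<lambda>y. g x y / y" "v x" "u x"] by simp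
    from picone_reaction_gap[OF \<open>0 < u x\<close> \<open>0 < v x\<close> assms(1) this] show ?thesis
      using True by (simp add: Hu_def Hv_def)
  qed (simp add: Hu_def Hv_def)
qed

theorem theorem5p2:
  fixes \<Omega> :: "'a::euclidean_space set" and s q c1 c2 :: real
    and g :: "'a \<Rightarrow> real \<Rightarrow> real" and u v w :: "'a \<Rightarrow> real"
  assumes "0 < s" and "s < 1" and "real DIM('a) > 2 * s"
    and "open \<Omega>" and "connected \<Omega>" and "bounded \<Omega>" and "C2_boundary \<Omega>"
    and "q > 0"
    and "caratheodory \<Omega> g"
    and "\<exists>M. AE x in lebesgue. x \<in> \<Omega> \<longrightarrow> (\<forall>y>0. M \<le> g x y)"
    and "AE x in lebesgue. x \<in> \<Omega> \<longrightarrow> antimono_on {0<..} (\<lambda>y. g x y / y)"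
    and "u \<in> Linf \<Omega>" and "u \<in> X0 s \<Omega>" and "v \<in> Linf \<Omega>" and "v \<in> X0 s \<Omega>"
    and "AE x in lebesgue. x \<in> \<Omega> \<longrightarrow> u x > 0"
    and "AE x in lebesgue. x \<in> \<Omega> \<longrightarrow> v x > 0"
    and "(\<integral>\<^sup>+ x. indicator \<Omega> x * ennreal (u x powr (1 - q)) \<partial>lebesgue) < \<infinity>"
    and "(\<integral>\<^sup>+ x. indicator \<Omega> x * ennreal (v x powr (1 - q)) \<partial>lebesgue) < \<infinity>"
    and "frac_sub s \<Omega> u (\<lambda>x. u x powr (- q) + g x (u x))"
    and "frac_super s \<Omega> v (\<lambda>x. v x powr (- q) + g x (v x))"
    and "w \<in> Linf \<Omega>" and "AE x in lebesgue. x \<in> \<Omega> \<longrightarrow> w x > 0"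
    and "c1 > 0" and "c2 > 0"
    and "AE x in lebesgue. x \<in> \<Omega> \<longrightarrow>
           c1 * w x \<le> u x \<and> u x \<le> c2 * w x \<and> c1 * w x \<le> v x \<and> v x \<le> c2 * w x"
    and "(\<integral>\<^sup>+ x. indicator \<Omega> x * ennreal (\<bar>g x (c1 * w x)\<bar> * w x) \<partial>lebesgue) < \<infinity>"
    and "(\<integral>\<^sup>+ x. indicator \<Omega> x * ennreal (\<bar>g x (c2 * w x)\<bar> * w x) \<partial>lebesgue) < \<infinity>"
  shows "AE x in lebesgue. x \<in> \<Omega> \<longrightarrow> u x \<le> v x"
proof -
  note s = assms(1,2) and \<Omega> = assms(4) and c = assms(24,25)
  have w: "w \<in> borel_measurable (restrict_space lebesgue \<Omega>)" using assms(22) by (simp add: Linf_def)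
  note integrable = integrable_picone_reactions[OF \<Omega> assms(9) c assms(13,15) w assms(11,23,26,18,19,27,28)]
  have "0 \<le> c2 / c1" using c by simp
  have "(\<integral> x. indicator \<Omega> x * (v x powr - q + g x (v x)) * picone_psi (u x) (v x) \<partial>lebesgue)
      \<le> (\<integral> x. indicator \<Omega> x * (u x powr - q + g x (u x)) * picone_phi (u x) (v x) \<partial>lebesgue)"
    using integral_picone_le_of_sub_super[OF \<Omega> s assms(13,15) \<open>0 \<le> c2 / c1\<close>
        AE_comparable_of_bounds[OF c(1) assms(13,15,23,26)] assms(20,21)] integrable
    by simp
  with integrable AE_picone_reaction_gap[OF assms(8,16,17,11)]
  have "AE x in lebesgue. \<not> (x \<in> \<Omega> \<and> v x < u x)"
    by (intro AE_not_of_integral_le) (auto elim: eventually_mono)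
  then show ?thesis by eventually_elim auto
qed

end
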